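(* Let $\beta\ge1$. For every $\delta>0$ there exists an instance of $1\mid t_j\mid\sum C_j$ with obligatory tests on which $\beta$-SORT satisfies \[ \frac{\mathit{ALG}}{\mathit{OPT}}\ge\frac{\sqrt{4\beta(\beta^2+\beta-1)+1}+1}{2\beta}-\delta. \]
   Context: Scheduling with obligatory tests: jobs $J=\{1,\dots,n\}$ on a single machine; job $j$ has a known test time $t_j\ge0$ and a processing time $p_j\ge0$ revealed only when its test has been executed. The test must be executed before the processing part (which may start any time later); operations are non-preemptive, one at a time. $C_j$ is the completion time of the processing part of $j$; objective $\sum_jC_j$. $\mathit{OPT}$ is the optimal offline objective value (all tests must also be executed); $\mathit{ALG}$ is the algorithm's value. Algorithm $\beta$-SORT (parameter $\beta>0$): maintain a priority queue of available operations, initially containing the test of every job $j$ with priority $\beta t_j$; repeatedly remove a minimum-priority operation and execute it immediately; after executing the test of $j$, insert the processing part of $j$ with priority $p_j$. *)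

theory Defs
  imports Complex_Main
begin

datatype operation = Test nat | Proc nat

definition valid_instance :: "nat \<Rightarrow> (nat \<Rightarrow> real) \<Rightarrow> (nat \<Rightarrow> real) \<Rightarrow> bool" where
  "valid_instance n t p \<longleftrightarrow> (\<forall>j<n. t j \<ge> 0 \<and> p j \<ge> 0)"

definition all_ops :: "nat \<Rightarrow> operation set" where
  "all_ops n = Test ` {..<n} \<union> Proc ` {..<n}"

fun op_len :: "(nat \<Rightarrow> real) \<Rightarrow> (nat \<Rightarrow> real) \<Rightarrow> operation \<Rightarrow> real" where
  "op_len t p (Test j) = t j"
| "op_len t p (Proc j) = p j"

definition feasible_schedule :: "nat \<Rightarrow> operation list \<Rightarrow> bool" where
  "feasible_schedule n \<sigma> \<longleftrightarrow> distinct \<sigma> \<and> set \<sigma> = all_ops n \<and>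
     (\<forall>i k. i < length \<sigma> \<longrightarrow> k < length \<sigma> \<longrightarrow> (\<exists>j. \<sigma> ! i = Test j \<and> \<sigma> ! k = Proc j) \<longrightarrow> i < k)"

definition completion_at :: "(nat \<Rightarrow> real) \<Rightarrow> (nat \<Rightarrow> real) \<Rightarrow> operation list \<Rightarrow> nat \<Rightarrow> real" where
  "completion_at t p \<sigma> i = (\<Sum>k\<le>i. op_len t p (\<sigma> ! k))"

definition compl_time :: "(nat \<Rightarrow> real) \<Rightarrow> (nat \<Rightarrow> real) \<Rightarrow> operation list \<Rightarrow> nat \<Rightarrow> real" where
  "compl_time t p \<sigma> j = completion_at t p \<sigma> (THE i. i < length \<sigma> \<and> \<sigma> ! i = Proc j)"

definition cost :: "nat \<Rightarrow> (nat \<Rightarrow> real) \<Rightarrow> (nat \<Rightarrow> real) \<Rightarrow> operation list \<Rightarrow> real" where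
  "cost n t p \<sigma> = (\<Sum>j<n. compl_time t p \<sigma> j)"

definition OPT :: "nat \<Rightarrow> (nat \<Rightarrow> real) \<Rightarrow> (nat \<Rightarrow> real) \<Rightarrow> real" where
  "OPT n t p = Min {cost n t p \<sigma> | \<sigma>. feasible_schedule n \<sigma>}"

definition available :: "nat \<Rightarrow> operation list \<Rightarrow> operation set" where
  "available n d = {Test j | j. j < n \<and> Test j \<notin> set d} \<union>
                   {Proc j | j. j < n \<and> Test j \<in> set d \<and> Proc j \<notin> set d}"

fun priority :: "real \<Rightarrow> (nat \<Rightarrow> real) \<Rightarrow> (nat \<Rightarrow> real) \<Rightarrow> operation \<Rightarrow> real" where
  "priority \<beta> t p (Test j) = \<beta> * t j"
| "priority \<beta> t p (Proc j) = p j"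

text \<open>sigma is a possible run of beta-SORT (ties broken arbitrarily): at every step a
  minimum-priority available operation is executed, until all operations are done.\<close>
definition beta_sort_run :: "real \<Rightarrow> nat \<Rightarrow> (nat \<Rightarrow> real) \<Rightarrow> (nat \<Rightarrow> real) \<Rightarrow> operation list \<Rightarrow> bool" where
  "beta_sort_run \<beta> n t p \<sigma> \<longleftrightarrow> length \<sigma> = 2 * n \<and>
     (\<forall>i < length \<sigma>. \<sigma> ! i \<in> available n (take i \<sigma>) \<and>
        (\<forall>x \<in> available n (take i \<sigma>). priority \<beta> t p (\<sigma> ! i) \<le> priority \<beta> t p x))"

end

theory Submission
  imports Defs
begin

text \<open>The bad instance has k short jobs (test time 1 + 2\<epsilon>, processing time 0) and m long jobs
  (test time 1, processing time \<beta>(1 + \<epsilon>)). The test priority \<beta>(1 + 2\<epsilon>) of the short jobs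
  exceeds both priorities of the long jobs, so \<beta>-SORT first tests all long jobs, then processes
  them, and only afterwards runs the short jobs, each test directly followed by its processing
  part. Up to O(\<epsilon>) and terms linear in k and m, its cost is
  (1 + \<beta>/2)m^2 + (1 + \<beta>)km + k^2/2, whereas scheduling the jobs one after the other,
  short ones first, costs k^2/2 + km + (1 + \<beta>)m^2/2. For the stated bound r, the root of
  \<beta>r^2 - r = \<beta>^2 + \<beta> - 1, and x = (1 + \<beta> - r)/(r - 1), the first form minus r times the
  second is -(r - 1)(k - xm)^2/2, so k \<approx> xm and m \<rightarrow> \<infinity> drive the ratio to r.\<close>

section \<open>Runs of \<beta>-SORT\<close>

fun job :: "operation \<Rightarrow> nat" where
  "job (Test j) = j"
| "job (Proc j) = j"

fun is_proc :: "operation \<Rightarrow> bool" where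
  "is_proc (Test j) = False"
| "is_proc (Proc j) = True"

lemma is_proc_iff: "is_proc x \<longleftrightarrow> x = Proc (job x)"
  by (cases x) auto

lemma Test_in_available_iff [simp]:
  "Test j \<in> available n d \<longleftrightarrow> j < n \<and> Test j \<notin> set d"
  by (simp add: available_def)

lemma Proc_in_available_iff [simp]:
  "Proc j \<in> available n d \<longleftrightarrow> j < n \<and> Test j \<in> set d \<and> Proc j \<notin> set d"
  by (simp add: available_def)

lemma available_subset_all_ops: "available n d \<subseteq> all_ops n"
  by (auto simp: available_def all_ops_def)

lemma notin_set_if_available: "x \<in> available n d \<Longrightarrow> x \<notin> set d"
  by (cases x) auto

lemma available_nonempty: "\<not> all_ops n \<subseteq> set d \<Longrightarrow> available n d \<noteq> {}"
  by (auto simp: all_ops_def) (metis Test_in_available_iff Proc_in_available_iff empty_iff)+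

lemma finite_all_ops: "finite (all_ops n)"
  by (simp add: all_ops_def)

lemma card_all_ops: "card (all_ops n) = 2 * n"
proof -
  have "card (all_ops n) = card (Test ` {..<n}) + card (Proc ` {..<n})"
    unfolding all_ops_def by (rule card_Un_disjoint) auto
  also have "\<dots> = 2 * n"
    by (simp add: card_image inj_on_def)
  finally show ?thesis .
qed

lemma ex_notin_set_if_card_less: "card (set xs) < card A \<Longrightarrow> \<exists>a\<in>A. a \<notin> set xs"
  by (meson card_mono finite_set not_le subsetI)

definition sort_prefix :: "real \<Rightarrow> nat \<Rightarrow> (nat \<Rightarrow> real) \<Rightarrow> (nat \<Rightarrow> real) \<Rightarrow> operation list \<Rightarrow> bool" where
  "sort_prefix \<beta> n t p \<sigma> \<longleftrightarrow> (\<forall>i < length \<sigma>. \<sigma> ! i \<in> available n (take i \<sigma>) \<and>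
     (\<forall>x \<in> available n (take i \<sigma>). priority \<beta> t p (\<sigma> ! i) \<le> priority \<beta> t p x))"

lemma beta_sort_run_iff:
  "beta_sort_run \<beta> n t p \<sigma> \<longleftrightarrow> length \<sigma> = 2 * n \<and> sort_prefix \<beta> n t p \<sigma>"
  by (simp add: beta_sort_run_def sort_prefix_def)

lemma sort_prefix_Nil [simp]: "sort_prefix \<beta> n t p []"
  by (simp add: sort_prefix_def)

lemma sort_prefix_snoc:
  "sort_prefix \<beta> n t p (\<sigma> @ [x]) \<longleftrightarrow> sort_prefix \<beta> n t p \<sigma> \<and> x \<in> available n \<sigma> \<and>
     (\<forall>y \<in> available n \<sigma>. priority \<beta> t p x \<le> priority \<beta> t p y)"
  by (auto simp: sort_prefix_def nth_append less_Suc_eq)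

lemma sort_prefix_take: "sort_prefix \<beta> n t p \<sigma> \<Longrightarrow> sort_prefix \<beta> n t p (take q \<sigma>)"
  by (simp add: sort_prefix_def)

lemma sort_prefix_distinct: "sort_prefix \<beta> n t p \<sigma> \<Longrightarrow> distinct \<sigma>"
  by (induction \<sigma> rule: rev_induct) (auto simp: sort_prefix_snoc dest: notin_set_if_available)

lemma sort_prefix_subset: "sort_prefix \<beta> n t p \<sigma> \<Longrightarrow> set \<sigma> \<subseteq> all_ops n"
  by (induction \<sigma> rule: rev_induct) (auto simp: sort_prefix_snoc dest: subsetD[OF available_subset_all_ops])

lemma sort_prefix_test_before_proc: "sort_prefix \<beta> n t p \<sigma> \<Longrightarrow> Proc j \<in> set \<sigma> \<Longrightarrow> Test j \<in> set \<sigma>"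
  by (induction \<sigma> rule: rev_induct) (auto simp: sort_prefix_snoc)

lemma sort_prefix_exists: "L \<le> 2 * n \<Longrightarrow> \<exists>\<sigma>. length \<sigma> = L \<and> sort_prefix \<beta> n t p \<sigma>"
proof (induction L)
  case 0
  show ?case by simp
next
  case (Suc L)
  then obtain \<sigma> where \<sigma>: "length \<sigma> = L" "sort_prefix \<beta> n t p \<sigma>"
    by auto
  have "card (set \<sigma>) < card (all_ops n)"
    using Suc.prems \<sigma> by (simp add: distinct_card sort_prefix_distinct card_all_ops)
  then have "\<not> all_ops n \<subseteq> set \<sigma>"
    by (meson card_mono finite_set not_le)
  then have ne: "available n \<sigma> \<noteq> {}"
    by (rule available_nonempty)
  have fin: "finite (available n \<sigma>)"
    using available_subset_all_ops finite_all_ops by (rule finite_subset)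
  define x where "x = arg_min_on (priority \<beta> t p) (available n \<sigma>)"
  have "sort_prefix \<beta> n t p (\<sigma> @ [x])"
    unfolding sort_prefix_snoc x_def
    using \<sigma>(2) arg_min_if_finite(1)[OF fin ne] arg_min_least[OF fin ne] by blast
  then show ?case
    using \<sigma>(1) by (metis length_append_singleton)
qed

lemma beta_sort_run_exists: "\<exists>\<sigma>. beta_sort_run \<beta> n t p \<sigma>"
  using sort_prefix_exists[of "2 * n"] by (simp add: beta_sort_run_iff)

lemma beta_sort_run_permutation:
  assumes "beta_sort_run \<beta> n t p \<sigma>"
  shows "distinct \<sigma>" and "set \<sigma> = all_ops n"
proof -
  have \<sigma>: "length \<sigma> = 2 * n" "sort_prefix \<beta> n t p \<sigma>"
    using assms by (auto simp: beta_sort_run_iff)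
  show "distinct \<sigma>"
    using \<sigma>(2) by (rule sort_prefix_distinct)
  then show "set \<sigma> = all_ops n"
    using \<sigma> sort_prefix_subset finite_all_ops
    by (metis card_all_ops card_subset_eq distinct_card)
qed

section \<open>Costs and the optimum\<close>

lemma compl_time_at:
  assumes "distinct \<sigma>" "i < length \<sigma>" "\<sigma> ! i = Proc j"
  shows "compl_time t p \<sigma> j = completion_at t p \<sigma> i"
proof -
  have "(THE i. i < length \<sigma> \<and> \<sigma> ! i = Proc j) = i"
    using assms by (intro the_equality) (simp, metis nth_eq_iff_index_eq)
  then show ?thesis
    by (simp add: compl_time_def)
qed

lemma cost_eq_sum_proc_positions:
  assumes "distinct \<sigma>" and "set \<sigma> = all_ops n"
  shows "cost n t p \<sigma> = (\<Sum>i | i < length \<sigma> \<and> is_proc (\<sigma> ! i). completion_at t p \<sigma> i)"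
proof -
  let ?P = "{i. i < length \<sigma> \<and> is_proc (\<sigma> ! i)}"
  have "bij_betw (\<lambda>i. job (\<sigma> ! i)) ?P {..<n}"
  proof (rule bij_betw_imageI)
    show "inj_on (\<lambda>i. job (\<sigma> ! i)) ?P"
      using assms(1) by (auto simp: inj_on_def is_proc_iff nth_eq_iff_index_eq)
    show "(\<lambda>i. job (\<sigma> ! i)) ` ?P = {..<n}"
    proof
      show "(\<lambda>i. job (\<sigma> ! i)) ` ?P \<subseteq> {..<n}"
        using assms(2) by (auto simp: is_proc_iff all_ops_def)
      show "{..<n} \<subseteq> (\<lambda>i. job (\<sigma> ! i)) ` ?P"
      proof
        fix j assume "j \<in> {..<n}"
        then have "Proc j \<in> set \<sigma>"
          using assms(2) by (auto simp: all_ops_def)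
        then obtain i where "i < length \<sigma>" "\<sigma> ! i = Proc j"
          by (auto simp: in_set_conv_nth)
        then show "j \<in> (\<lambda>i. job (\<sigma> ! i)) ` ?P"
          by (intro image_eqI[of _ _ i]) auto
      qed
    qed
  qed
  then have "cost n t p \<sigma> = (\<Sum>i\<in>?P. compl_time t p \<sigma> (job (\<sigma> ! i)))"
    unfolding cost_def by (rule sum.reindex_bij_betw[symmetric])
  also have "\<dots> = (\<Sum>i\<in>?P. completion_at t p \<sigma> i)"
    using assms(1) by (intro sum.cong refl compl_time_at) (auto simp: is_proc_iff[symmetric])
  finally show ?thesis .
qed

definition start_time :: "(nat \<Rightarrow> real) \<Rightarrow> (nat \<Rightarrow> real) \<Rightarrow> operation list \<Rightarrow> nat \<Rightarrow> real" where
  "start_time t p \<sigma> q = (\<Sum>i<q. op_len t p (\<sigma> ! i))"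

lemma completion_at_eq_start_time: "completion_at t p \<sigma> q = start_time t p \<sigma> (Suc q)"
  by (simp add: completion_at_def start_time_def lessThan_Suc_atMost)

lemma start_time_Suc: "start_time t p \<sigma> (Suc q) = start_time t p \<sigma> q + op_len t p (\<sigma> ! q)"
  by (simp add: start_time_def)

definition jobwise_schedule :: "nat \<Rightarrow> operation list" where
  "jobwise_schedule n = map (\<lambda>q. if even q then Test (q div 2) else Proc (q div 2)) [0..<2 * n]"

lemma length_jobwise_schedule [simp]: "length (jobwise_schedule n) = 2 * n"
  by (simp add: jobwise_schedule_def)

lemma nth_jobwise_schedule:
  "q < 2 * n \<Longrightarrow> jobwise_schedule n ! q = (if even q then Test (q div 2) else Proc (q div 2))"
  by (simp add: jobwise_schedule_def)

lemma distinct_jobwise_schedule: "distinct (jobwise_schedule n)"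
  by (auto simp: jobwise_schedule_def distinct_map inj_on_def split: if_splits)
    (metis odd_two_times_div_two_succ)+

lemma jobwise_schedule_feasible: "feasible_schedule n (jobwise_schedule n)"
proof -
  have "set (jobwise_schedule n) = all_ops n"
  proof
    show "set (jobwise_schedule n) \<subseteq> all_ops n"
      by (auto simp: jobwise_schedule_def all_ops_def)
    show "all_ops n \<subseteq> set (jobwise_schedule n)"
    proof
      fix x assume "x \<in> all_ops n"
      then obtain j where "j < n" "x = Test j \<or> x = Proc j"
        by (auto simp: all_ops_def)
      then show "x \<in> set (jobwise_schedule n)"
        unfolding jobwise_schedule_def set_map
        by (elim disjE) (auto intro: rev_image_eqI[of "2 * j"] rev_image_eqI[of "Suc (2 * j)"])
    qed
  qed
  moreover have "i < k"
    if "i < 2 * n" "k < 2 * n" "jobwise_schedule n ! i = Test j" "jobwise_schedule n ! k = Proc j"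
    for i k j
    using that by (auto simp: nth_jobwise_schedule split: if_splits) presburger
  ultimately show ?thesis
    using distinct_jobwise_schedule unfolding feasible_schedule_def length_jobwise_schedule by blast
qed

lemma cost_jobwise_schedule: "cost n t p (jobwise_schedule n) = (\<Sum>j<n. \<Sum>i\<le>j. t i + p i)"
  unfolding cost_def
proof (rule sum.cong[OF refl])
  fix j assume "j \<in> {..<n}"
  then have j: "Suc (2 * j) < 2 * n"
    by simp
  have "compl_time t p (jobwise_schedule n) j = completion_at t p (jobwise_schedule n) (Suc (2 * j))"
    using j by (intro compl_time_at distinct_jobwise_schedule) (simp_all add: nth_jobwise_schedule)
  also have "\<dots> = (\<Sum>i\<le>j. t i + p i)"
    unfolding completion_at_def sum.in_pairs_0
    using j by (intro sum.cong refl) (simp add: nth_jobwise_schedule)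
  finally show "compl_time t p (jobwise_schedule n) j = (\<Sum>i\<le>j. t i + p i)" .
qed

lemma finite_feasible_schedules: "finite {\<sigma>. feasible_schedule n \<sigma>}"
proof -
  have "{\<sigma>. feasible_schedule n \<sigma>} \<subseteq> {xs. set xs \<subseteq> all_ops n \<and> length xs \<le> 2 * n}"
    unfolding feasible_schedule_def using distinct_card card_all_ops by fastforce
  then show ?thesis
    by (rule finite_subset) (intro finite_lists_length_le finite_all_ops)
qed

lemma OPT_attained: "\<exists>\<sigma>. feasible_schedule n \<sigma> \<and> OPT n t p = cost n t p \<sigma>"
proof -
  have "finite {cost n t p \<sigma> | \<sigma>. feasible_schedule n \<sigma>}"
    using finite_feasible_schedules[of n] by (auto simp: setcompr_eq_image)
  then have "OPT n t p \<in> {cost n t p \<sigma> | \<sigma>. feasible_schedule n \<sigma>}"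
    unfolding OPT_def using jobwise_schedule_feasible[of n] by (intro Min_in) auto
  then show ?thesis
    by auto
qed

lemma OPT_le_cost: "feasible_schedule n \<sigma> \<Longrightarrow> OPT n t p \<le> cost n t p \<sigma>"
  unfolding OPT_def using finite_feasible_schedules[of n]
  by (intro Min_le) (auto simp: setcompr_eq_image)

lemma cost_pos:
  assumes "valid_instance n t p" and "feasible_schedule n \<sigma>" and "j0 < n" "p j0 > 0"
  shows "cost n t p \<sigma> > 0"
proof -
  have d: "distinct \<sigma>" and s: "set \<sigma> = all_ops n"
    using assms(2) by (auto simp: feasible_schedule_def)
  have len_nonneg: "op_len t p x \<ge> 0" if "x \<in> set \<sigma>" for x
    using that assms(1) unfolding s by (cases x) (auto simp: valid_instance_def all_ops_def)
  have proc_pos: "\<exists>i < length \<sigma>. \<sigma> ! i = Proc j \<and> compl_time t p \<sigma> j = completion_at t p \<sigma> i"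
    if "j < n" for j
  proof -
    have "Proc j \<in> set \<sigma>"
      using that s by (auto simp: all_ops_def)
    then obtain i where "i < length \<sigma>" "\<sigma> ! i = Proc j"
      by (auto simp: in_set_conv_nth)
    then show ?thesis
      using d by (auto intro: compl_time_at)
  qed
  have len_le_completion: "op_len t p (\<sigma> ! i) \<le> completion_at t p \<sigma> i" if "i < length \<sigma>" for i
    unfolding completion_at_def using that by (intro member_le_sum len_nonneg) auto
  have compl_nonneg: "compl_time t p \<sigma> j \<ge> 0" if "j < n" for j
    using proc_pos[OF that] len_le_completion len_nonneg by (metis nth_mem order_trans)
  obtain i where "i < length \<sigma>" "\<sigma> ! i = Proc j0" "compl_time t p \<sigma> j0 = completion_at t p \<sigma> i"
    using proc_pos[OF assms(3)] by blast
  then have "0 < compl_time t p \<sigma> j0"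
    using len_le_completion[of i] assms(4) by simp
  also have "\<dots> \<le> cost n t p \<sigma>"
    unfolding cost_def using assms(3) compl_nonneg by (intro member_le_sum) auto
  finally show ?thesis .
qed

lemma OPT_pos:
  assumes "valid_instance n t p" "j0 < n" "p j0 > 0"
  shows "OPT n t p > 0"
proof -
  obtain \<sigma> where "feasible_schedule n \<sigma>" "OPT n t p = cost n t p \<sigma>"
    using OPT_attained by blast
  then show ?thesis
    using cost_pos[OF assms(1) _ assms(2,3)] by simp
qed

section \<open>The lower-bound instance\<close>

text \<open>Jobs j < k are the short ones. The \<epsilon>-perturbations make all priority comparisons that
  matter strict, so that no tie-breaking rule can help \<beta>-SORT.\<close>

definition lb_test :: "nat \<Rightarrow> real \<Rightarrow> nat \<Rightarrow> real" where
  "lb_test k \<epsilon> j = (if j < k then 1 + 2 * \<epsilon> else 1)"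

definition lb_proc :: "real \<Rightarrow> nat \<Rightarrow> real \<Rightarrow> nat \<Rightarrow> real" where
  "lb_proc \<beta> k \<epsilon> j = (if j < k then 0 else \<beta> * (1 + \<epsilon>))"

lemma lb_instance_valid: "\<beta> \<ge> 0 \<Longrightarrow> \<epsilon> \<ge> 0 \<Longrightarrow> valid_instance n (lb_test k \<epsilon>) (lb_proc \<beta> k \<epsilon>)"
  by (simp add: valid_instance_def lb_test_def lb_proc_def)

text \<open>For k short and m long jobs: the cost of \<beta>-SORT with \<epsilon> dropped, and the cost of the
  jobwise schedule with \<epsilon> = 0.\<close>

definition alg_bound :: "real \<Rightarrow> real \<Rightarrow> real \<Rightarrow> real" where
  "alg_bound \<beta> K M = M * M + \<beta> * M * (M + 1) / 2 + K * (M + \<beta> * M) + K * (K + 1) / 2"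

definition opt_bound :: "real \<Rightarrow> real \<Rightarrow> real \<Rightarrow> real" where
  "opt_bound \<beta> K M = K * (K + 1) / 2 + K * M + (1 + \<beta>) * M * (M + 1) / 2"

lemma sum_lessThan_of_nat: "(\<Sum>i<n. real i) = real n * (real n - 1) / 2"
  by (induction n) (simp_all add: field_simps)

locale lb_run =
  fixes \<beta> \<epsilon> :: real and k m :: nat and \<sigma> :: "operation list"
  assumes beta_pos: "\<beta> > 0" and eps_pos: "\<epsilon> > 0"
    and run: "beta_sort_run \<beta> (k + m) (lb_test k \<epsilon>) (lb_proc \<beta> k \<epsilon>) \<sigma>"
begin

abbreviation "n \<equiv> k + m"
abbreviation "long \<equiv> {k..<k + m}"
abbreviation "prio \<equiv> priority \<beta> (lb_test k \<epsilon>) (lb_proc \<beta> k \<epsilon>)"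
abbreviation "len \<equiv> op_len (lb_test k \<epsilon>) (lb_proc \<beta> k \<epsilon>)"
abbreviation "start \<equiv> start_time (lb_test k \<epsilon>) (lb_proc \<beta> k \<epsilon>) \<sigma>"

lemma length_run: "length \<sigma> = 2 * n"
  using run by (simp add: beta_sort_run_iff)

lemma distinct_run: "distinct \<sigma>"
  and set_run: "set \<sigma> = all_ops n"
  using beta_sort_run_permutation[OF run] by auto

lemma nth_available: "q < 2 * n \<Longrightarrow> \<sigma> ! q \<in> available n (take q \<sigma>)"
  and prio_nth_le: "q < 2 * n \<Longrightarrow> x \<in> available n (take q \<sigma>) \<Longrightarrow> prio (\<sigma> ! q) \<le> prio x"
  using run by (auto simp: beta_sort_run_def)

lemma set_take_run: "q \<le> 2 * n \<Longrightarrow> set (take q \<sigma>) = (!) \<sigma> ` {..<q}"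
  using length_run by (simp add: nth_image[symmetric] atLeast0LessThan)

lemma nth_in_set_take_run: "i < q \<Longrightarrow> q \<le> 2 * n \<Longrightarrow> \<sigma> ! i \<in> set (take q \<sigma>)"
  using set_take_run by auto

lemma card_set_take_run: "q \<le> 2 * n \<Longrightarrow> card (set (take q \<sigma>)) = q"
  using distinct_run length_run by (simp add: distinct_card)

lemma test_done_if_proc_done: "Proc j \<in> set (take q \<sigma>) \<Longrightarrow> Test j \<in> set (take q \<sigma>)"
  using run by (auto simp: beta_sort_run_iff intro: sort_prefix_test_before_proc sort_prefix_take)

lemma prio_order: "0 < \<beta>" "\<beta> < \<beta> * (1 + \<epsilon>)" "\<beta> * (1 + \<epsilon>) < \<beta> * (1 + 2 * \<epsilon>)"
  using beta_pos eps_pos by simp_all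

lemma long_test_at: "q < m \<Longrightarrow> \<sigma> ! q \<in> Test ` long"
proof (induction q rule: less_induct)
  case (less q)
  have executed: "set (take q \<sigma>) \<subseteq> Test ` long"
    using less set_take_run[of q] by auto
  have "card (set (take q \<sigma>)) < card (Test ` long)"
    using less.prems card_set_take_run[of q] by (simp add: card_image inj_on_def)
  then obtain j where "j \<in> long" "Test j \<notin> set (take q \<sigma>)"
    using ex_notin_set_if_card_less by blast
  then have "prio (\<sigma> ! q) \<le> \<beta>"
    using prio_nth_le[of q "Test j"] less.prems by (auto simp: lb_test_def)
  moreover have "\<sigma> ! q \<in> available n (take q \<sigma>)"
    using less.prems by (intro nth_available) simp
  ultimately show ?case
    using executed prio_order by (cases "\<sigma> ! q") (auto simp: lb_test_def lb_proc_def split: if_splits)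
qed

lemma set_take_long_tests: "set (take m \<sigma>) = Test ` long"
proof (rule card_subset_eq)
  show "set (take m \<sigma>) \<subseteq> Test ` long"
    using long_test_at set_take_run[of m] by auto
  show "card (set (take m \<sigma>)) = card (Test ` long)"
    using card_set_take_run[of m] by (simp add: card_image inj_on_def)
qed simp

lemma long_proc_at: "m \<le> q \<Longrightarrow> q < 2 * m \<Longrightarrow> \<sigma> ! q \<in> Proc ` long"
proof (induction q rule: less_induct)
  case (less q)
  have executed: "set (take q \<sigma>) \<subseteq> Test ` long \<union> Proc ` long"
  proof
    fix x assume "x \<in> set (take q \<sigma>)"
    then obtain i where "i < q" "x = \<sigma> ! i"
      using less.prems set_take_run[of q] by auto
    then show "x \<in> Test ` long \<union> Proc ` long"
      using less.IH[of i] long_test_at[of i] less.prems by (cases "i < m") auto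
  qed
  have tested: "Test ` long \<subseteq> set (take q \<sigma>)"
    using set_take_long_tests set_take_subset_set_take[of m q \<sigma>] less.prems by simp
  have "card (set (take q \<sigma>)) < card (Test ` long \<union> Proc ` long)"
    using less.prems card_set_take_run[of q]
    by (subst card_Un_disjoint) (auto simp: card_image inj_on_def)
  then obtain j where j: "j \<in> long" "Proc j \<notin> set (take q \<sigma>)"
    using ex_notin_set_if_card_less tested by blast
  moreover have "Test j \<in> set (take q \<sigma>)"
    using j tested by blast
  ultimately have le: "prio (\<sigma> ! q) \<le> \<beta> * (1 + \<epsilon>)"
    using prio_nth_le[of q "Proc j"] less.prems by (auto simp: lb_proc_def)
  have avail: "\<sigma> ! q \<in> available n (take q \<sigma>)"
    using less.prems by (intro nth_available) simp
  show ?case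
  proof (cases "\<sigma> ! q")
    case (Test i)
    then have "Test i \<notin> set (take q \<sigma>)" "i < n"
      using avail by auto
    then have "i < k"
      using tested by (metis atLeastLessThan_iff imageI not_less subsetD)
    then show ?thesis
      using le Test prio_order by (simp add: lb_test_def)
  next
    case (Proc i)
    then show ?thesis
      using avail executed by auto
  qed
qed

lemma set_take_long_jobs: "set (take (2 * m) \<sigma>) = Test ` long \<union> Proc ` long"
proof (rule card_subset_eq)
  show "set (take (2 * m) \<sigma>) \<subseteq> Test ` long \<union> Proc ` long"
  proof
    fix x assume "x \<in> set (take (2 * m) \<sigma>)"
    then obtain i where "i < 2 * m" "x = \<sigma> ! i"
      using set_take_run[of "2 * m"] by auto
    then show "x \<in> Test ` long \<union> Proc ` long"
      using long_test_at[of i] long_proc_at[of i] by (cases "i < m") auto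
  qed
  show "card (set (take (2 * m) \<sigma>)) = card (Test ` long \<union> Proc ` long)"
    using card_set_take_run[of "2 * m"] by (subst card_Un_disjoint) (auto simp: card_image inj_on_def)
qed simp

lemma paired_prefix_closed:
  assumes pairs: "\<forall>l' < l. \<exists>j. \<sigma> ! (2 * m + 2 * l') = Test j \<and> \<sigma> ! Suc (2 * m + 2 * l') = Proc j"
    and "l \<le> k" and test: "Test j \<in> set (take (2 * m + 2 * l) \<sigma>)"
  shows "Proc j \<in> set (take (2 * m + 2 * l) \<sigma>)"
proof -
  have q: "2 * m + 2 * l \<le> 2 * n"
    using \<open>l \<le> k\<close> by simp
  obtain i where i: "i < 2 * m + 2 * l" "\<sigma> ! i = Test j"
    using test set_take_run[OF q] by auto
  show ?thesis
  proof (cases "i < 2 * m")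
    case True
    then have "Test j \<in> set (take (2 * m) \<sigma>)"
      using i nth_in_set_take_run[of i "2 * m"] by simp
    then have "Proc j \<in> set (take (2 * m) \<sigma>)"
      unfolding set_take_long_jobs by auto
    then show ?thesis
      using set_take_subset_set_take[of "2 * m" "2 * m + 2 * l" \<sigma>] by auto
  next
    case False
    define l' where "l' = (i - 2 * m) div 2"
    have l': "l' < l" "i = 2 * m + 2 * l' \<or> i = Suc (2 * m + 2 * l')"
      using False i(1) unfolding l'_def by presburger+
    then obtain j' where "\<sigma> ! (2 * m + 2 * l') = Test j'" "\<sigma> ! Suc (2 * m + 2 * l') = Proc j'"
      using pairs by blast
    then have "\<sigma> ! Suc (2 * m + 2 * l') = Proc j" "Suc (2 * m + 2 * l') < 2 * m + 2 * l"
      using l' i(2) by auto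
    then show ?thesis
      using nth_in_set_take_run[OF _ q] by metis
  qed
qed

text \<open>After the long jobs, every pair of steps starts with no processing part available, so a
  short test is executed, and its processing part of priority 0 follows immediately.\<close>

lemma short_pair_at: "l < k \<Longrightarrow> \<exists>j < k. \<sigma> ! (2 * m + 2 * l) = Test j \<and> \<sigma> ! Suc (2 * m + 2 * l) = Proc j"
proof (induction l rule: less_induct)
  case (less l)
  define q where "q = 2 * m + 2 * l"
  have q: "Suc q < 2 * n"
    using less.prems by (simp add: q_def)
  have closed: "Proc i \<in> set (take q \<sigma>)" if "Test i \<in> set (take q \<sigma>)" for i
    using less that unfolding q_def by (intro paired_prefix_closed) auto
  have tested: "Test i \<in> set (take q \<sigma>)" if "i \<in> long" for i
    using that set_take_long_tests set_take_subset_set_take[of m q \<sigma>] by (auto simp: q_def)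
  obtain j where j: "\<sigma> ! q = Test j" "j < k" "Test j \<notin> set (take q \<sigma>)"
  proof (cases "\<sigma> ! q")
    case (Test i)
    moreover have "Test i \<notin> set (take q \<sigma>)" "i < n"
      using nth_available[of q] q Test by auto
    moreover have "i < k"
      using calculation tested by (meson atLeastLessThan_iff not_less)
    ultimately show ?thesis
      using that by blast
  next
    case (Proc i)
    then show ?thesis
      using nth_available[of q] q closed by auto
  qed
  have take_Suc: "set (take (Suc q) \<sigma>) = insert (Test j) (set (take q \<sigma>))"
    using q length_run by (simp add: take_Suc_conv_app_nth j(1))
  have "Proc j \<notin> set (take q \<sigma>)"
    using j(3) test_done_if_proc_done by blast
  then have "Proc j \<in> available n (take (Suc q) \<sigma>)"
    using j take_Suc by simp
  from prio_nth_le[OF q this] have le: "prio (\<sigma> ! Suc q) \<le> 0"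
    using j(2) by (simp add: lb_proc_def)
  have "\<sigma> ! Suc q = Proc j"
  proof (cases "\<sigma> ! Suc q")
    case (Test i)
    then show ?thesis
      using le prio_order by (simp add: lb_test_def split: if_splits; linarith)
  next
    case (Proc i)
    then have "i < k"
      using le prio_order by (simp add: lb_proc_def split: if_splits; linarith)
    moreover have "Test i \<in> set (take (Suc q) \<sigma>)" "Proc i \<notin> set (take (Suc q) \<sigma>)"
      using nth_available[OF q] Proc by auto
    ultimately show ?thesis
      using Proc take_Suc closed by auto
  qed
  then show ?case
    using j unfolding q_def by blast
qed

lemma proc_positions:
  "{i. i < 2 * n \<and> is_proc (\<sigma> ! i)} = {m..<2 * m} \<union> (\<lambda>l. Suc (2 * m + 2 * l)) ` {..<k}"
proof (intro equalityI subsetI)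
  fix i assume "i \<in> {i. i < 2 * n \<and> is_proc (\<sigma> ! i)}"
  then have i: "i < 2 * n" "is_proc (\<sigma> ! i)"
    by auto
  define l where "l = (i - 2 * m) div 2"
  have "i < m \<or> m \<le> i \<and> i < 2 * m \<or> l < k \<and> i = 2 * m + 2 * l \<or> l < k \<and> i = Suc (2 * m + 2 * l)"
    using i(1) unfolding l_def by presburger
  then consider "i < m" | "m \<le> i" "i < 2 * m" | "l < k" "i = 2 * m + 2 * l" | "l < k" "i = Suc (2 * m + 2 * l)"
    by blast
  then show "i \<in> {m..<2 * m} \<union> (\<lambda>l. Suc (2 * m + 2 * l)) ` {..<k}"
  proof cases
    case 1
    then show ?thesis
      using i(2) long_test_at[of i] by auto
  next
    case 2
    then show ?thesis
      by simp
  next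
    case 3
    then show ?thesis
      using i(2) short_pair_at[of l] by auto
  next
    case 4
    then show ?thesis
      by auto
  qed
next
  fix i assume "i \<in> {m..<2 * m} \<union> (\<lambda>l. Suc (2 * m + 2 * l)) ` {..<k}"
  then consider "m \<le> i" "i < 2 * m" | l where "l < k" "i = Suc (2 * m + 2 * l)"
    by auto
  then show "i \<in> {i. i < 2 * n \<and> is_proc (\<sigma> ! i)}"
  proof cases
    case 1
    then show ?thesis
      using long_proc_at[of i] by auto
  next
    case 2
    then show ?thesis
      using short_pair_at[of l] by auto
  qed
qed

lemma len_long_test: "q < m \<Longrightarrow> len (\<sigma> ! q) = 1"
  using long_test_at[of q] by (auto simp: lb_test_def)

lemma len_long_proc: "m \<le> q \<Longrightarrow> q < 2 * m \<Longrightarrow> len (\<sigma> ! q) = \<beta> * (1 + \<epsilon>)"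
  using long_proc_at[of q] by (auto simp: lb_proc_def)

lemma len_short_pair:
  "l < k \<Longrightarrow> len (\<sigma> ! (2 * m + 2 * l)) = 1 + 2 * \<epsilon> \<and> len (\<sigma> ! Suc (2 * m + 2 * l)) = 0"
  using short_pair_at[of l] by (auto simp: lb_test_def lb_proc_def)

lemma start_after_long_tests: "start m = m"
proof -
  have "start m = (\<Sum>i<m. 1)"
    unfolding start_time_def by (rule sum.cong) (simp_all add: len_long_test)
  then show ?thesis
    by simp
qed

lemma start_during_long_procs: "a \<le> m \<Longrightarrow> real m + \<beta> * a \<le> start (m + a)"
proof (induction a)
  case 0
  then show ?case
    by (simp add: start_after_long_tests)
next
  case (Suc a)
  have "\<beta> \<le> \<beta> * (1 + \<epsilon>)"
    using prio_order by simp
  then show ?case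
    using Suc len_long_proc[of "m + a"] by (simp add: start_time_Suc algebra_simps)
qed

lemma start_during_short_pairs: "l \<le> k \<Longrightarrow> real m + \<beta> * m + l \<le> start (2 * m + 2 * l)"
proof (induction l)
  case 0
  then show ?case
    using start_during_long_procs[of m] by (simp add: mult_2)
next
  case (Suc l)
  have "start (2 * m + 2 * Suc l) = start (2 * m + 2 * l) + (1 + 2 * \<epsilon>)"
    using Suc.prems len_short_pair[of l] by (simp add: start_time_Suc)
  then show ?case
    using Suc eps_pos by simp
qed

lemma cost_ge_alg_bound: "alg_bound \<beta> k m \<le> cost n (lb_test k \<epsilon>) (lb_proc \<beta> k \<epsilon>) \<sigma>"
proof -
  let ?C = "completion_at (lb_test k \<epsilon>) (lb_proc \<beta> k \<epsilon>) \<sigma>"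
  have "alg_bound \<beta> k m = (\<Sum>a<m. real m + \<beta> * (real a + 1)) + (\<Sum>l<k. real m + \<beta> * m + (real l + 1))"
    by (simp add: alg_bound_def sum.distrib sum_distrib_left[symmetric] sum_lessThan_of_nat
        field_simps)
  also have "\<dots> \<le> (\<Sum>a<m. ?C (m + a)) + (\<Sum>l<k. ?C (Suc (2 * m + 2 * l)))"
  proof (intro add_mono sum_mono)
    fix a assume "a \<in> {..<m}"
    then show "real m + \<beta> * (real a + 1) \<le> ?C (m + a)"
      using start_during_long_procs[of "Suc a"] by (simp add: completion_at_eq_start_time add.commute)
  next
    fix l assume "l \<in> {..<k}"
    then show "real m + \<beta> * m + (real l + 1) \<le> ?C (Suc (2 * m + 2 * l))"
      using start_during_short_pairs[of "Suc l"] by (simp add: completion_at_eq_start_time)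
  qed
  also have "\<dots> = (\<Sum>i \<in> {m..<2 * m} \<union> (\<lambda>l. Suc (2 * m + 2 * l)) ` {..<k}. ?C i)"
  proof -
    have "(\<Sum>i\<in>{m..<2 * m}. ?C i) = (\<Sum>a<m. ?C (m + a))"
      using sum.shift_bounds_nat_ivl[of ?C 0 m m] by (simp add: mult_2 atLeast0LessThan add.commute)
    moreover have "inj_on (\<lambda>l. Suc (2 * m + 2 * l)) {..<k}"
      by (simp add: inj_on_def)
    ultimately show ?thesis
      by (subst sum.union_disjoint) (auto simp: sum.reindex)
  qed
  also have "\<dots> = cost n (lb_test k \<epsilon>) (lb_proc \<beta> k \<epsilon>) \<sigma>"
    using cost_eq_sum_proc_positions[OF distinct_run set_run] length_run proc_positions by simp
  finally show ?thesis .
qed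

end

lemma sum_lb_weights_atMost:
  "(\<Sum>i\<le>k + a. if i < k then 1 else 1 + \<beta>) = real k + (1 + \<beta>) * (real a + 1)"
proof (induction a)
  case 0
  have "(\<Sum>i<k. if i < k then 1 else 1 + \<beta>) = (\<Sum>i<k. 1 :: real)"
    by (rule sum.cong) simp_all
  then show ?case
    by (simp add: lessThan_Suc_atMost[symmetric])
next
  case (Suc a)
  then show ?case
    by (simp add: algebra_simps)
qed

lemma sum_nested_lb_weights:
  fixes k m :: nat
  shows "(\<Sum>j<k + m. \<Sum>i\<le>j. if i < k then 1 else 1 + \<beta>) = opt_bound \<beta> k m"
proof (induction m)
  case 0
  have "(\<Sum>j<k. \<Sum>i\<le>j. if i < k then 1 else 1 + \<beta>) = (\<Sum>j<k. real j + 1)"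
  proof (rule sum.cong)
    fix j assume "j \<in> {..<k}"
    then have "(\<Sum>i\<le>j. if i < k then 1 else 1 + \<beta>) = (\<Sum>i\<le>j. 1 :: real)"
      by (intro sum.cong) auto
    then show "(\<Sum>i\<le>j. if i < k then 1 else 1 + \<beta>) = real j + 1"
      by simp
  qed simp
  then show ?case
    by (simp add: sum.distrib sum_lessThan_of_nat opt_bound_def field_simps)
next
  case (Suc m)
  then show ?case
    by (simp add: sum_lb_weights_atMost opt_bound_def field_simps)
qed

lemma OPT_lb_instance_le:
  fixes k m :: nat
  assumes "\<beta> \<ge> 0" "\<epsilon> \<ge> 0"
  shows "OPT (k + m) (lb_test k \<epsilon>) (lb_proc \<beta> k \<epsilon>) \<le> (1 + 2 * \<epsilon>) * opt_bound \<beta> k m"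
proof -
  have job_len: "lb_test k \<epsilon> i + lb_proc \<beta> k \<epsilon> i \<le> (1 + 2 * \<epsilon>) * (if i < k then 1 else 1 + \<beta>)" for i
    using assms by (simp add: lb_test_def lb_proc_def algebra_simps)
  have "OPT (k + m) (lb_test k \<epsilon>) (lb_proc \<beta> k \<epsilon>) \<le> cost (k + m) (lb_test k \<epsilon>) (lb_proc \<beta> k \<epsilon>) (jobwise_schedule (k + m))"
    by (rule OPT_le_cost[OF jobwise_schedule_feasible])
  also have "\<dots> \<le> (\<Sum>j<k + m. \<Sum>i\<le>j. (1 + 2 * \<epsilon>) * (if i < k then 1 else 1 + \<beta>))"
    unfolding cost_jobwise_schedule by (intro sum_mono job_len)
  also have "\<dots> = (1 + 2 * \<epsilon>) * opt_bound \<beta> k m"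
    by (simp add: sum_distrib_left[symmetric] sum_nested_lb_weights del: of_nat_add)
  finally show ?thesis .
qed

lemma beta_sort_lb_ratio:
  fixes k m :: nat
  assumes "\<beta> > 0" "\<epsilon> > 0" "m \<ge> 1" and bound: "c * opt_bound \<beta> k m \<le> alg_bound \<beta> k m"
    and run: "beta_sort_run \<beta> (k + m) (lb_test k \<epsilon>) (lb_proc \<beta> k \<epsilon>) \<sigma>"
  shows "c / (1 + 2 * \<epsilon>) \<le> cost (k + m) (lb_test k \<epsilon>) (lb_proc \<beta> k \<epsilon>) \<sigma> / OPT (k + m) (lb_test k \<epsilon>) (lb_proc \<beta> k \<epsilon>)"
proof -
  interpret lb_run \<beta> \<epsilon> k m \<sigma>
    using assms by unfold_locales
  let ?OPT = "OPT (k + m) (lb_test k \<epsilon>) (lb_proc \<beta> k \<epsilon>)"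
  have OPT: "0 < ?OPT"
    using assms by (intro OPT_pos[of _ _ _ k] lb_instance_valid) (auto simp: lb_proc_def)
  have U: "0 < opt_bound \<beta> k m"
    using assms by (simp add: opt_bound_def add_nonneg_pos)
  have scaled_U: "0 < (1 + 2 * \<epsilon>) * opt_bound \<beta> k m"
    using U assms(2) by simp
  have "c / (1 + 2 * \<epsilon>) = c * opt_bound \<beta> k m / ((1 + 2 * \<epsilon>) * opt_bound \<beta> k m)"
    using U by simp
  also have "\<dots> \<le> alg_bound \<beta> k m / ((1 + 2 * \<epsilon>) * opt_bound \<beta> k m)"
    using bound scaled_U by (intro divide_right_mono) auto
  also have "\<dots> \<le> alg_bound \<beta> k m / ?OPT"
    using OPT_lb_instance_le[of \<beta> \<epsilon> k m] OPT scaled_U assms(1,2)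
    by (intro divide_left_mono) (auto simp: alg_bound_def)
  also have "\<dots> \<le> cost (k + m) (lb_test k \<epsilon>) (lb_proc \<beta> k \<epsilon>) \<sigma> / ?OPT"
    using cost_ge_alg_bound OPT by (intro divide_right_mono) auto
  finally show ?thesis .
qed

section \<open>The limit ratio\<close>

definition lb_ratio :: "real \<Rightarrow> real" where
  "lb_ratio \<beta> = (sqrt (4 * \<beta> * (\<beta>^2 + \<beta> - 1) + 1) + 1) / (2 * \<beta>)"

lemma lb_ratio_facts:
  assumes "\<beta> \<ge> 1"
  shows "\<beta> * lb_ratio \<beta> ^ 2 - lb_ratio \<beta> = \<beta>^2 + \<beta> - 1"
    and "1 < lb_ratio \<beta>" and "lb_ratio \<beta> < 1 + \<beta>"
proof -
  define s where "s = sqrt (4 * \<beta> * (\<beta>^2 + \<beta> - 1) + 1)"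
  have \<beta>: "0 < \<beta>" "1 \<le> \<beta>^2"
    using assms by (simp_all add: one_le_power)
  have "0 \<le> 4 * \<beta> * (\<beta>^2 + \<beta> - 1) + 1"
    using \<beta> by (intro add_nonneg_nonneg mult_nonneg_nonneg) auto
  then have s2: "s^2 = 4 * \<beta> * (\<beta>^2 + \<beta> - 1) + 1"
    unfolding s_def by simp
  have r: "lb_ratio \<beta> = (s + 1) / (2 * \<beta>)"
    by (simp add: lb_ratio_def s_def)
  show "\<beta> * lb_ratio \<beta> ^ 2 - lb_ratio \<beta> = \<beta>^2 + \<beta> - 1"
    using \<beta> unfolding r by (simp add: power2_eq_square field_simps s2[unfolded power2_eq_square])
  have "(2 * \<beta> - 1)^2 < 4 * \<beta> * (\<beta>^2 + \<beta> - 1) + 1"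
    using \<beta> by (simp add: power2_eq_square algebra_simps)
  then have "2 * \<beta> - 1 < s"
    unfolding s_def by (rule real_less_rsqrt)
  then show "1 < lb_ratio \<beta>"
    unfolding r using \<beta> by simp
  have "(2 * \<beta>^2 + 2 * \<beta> - 1)^2 - (4 * \<beta> * (\<beta>^2 + \<beta> - 1) + 1) = 4 * \<beta>^2 * (\<beta>^2 + \<beta> - 1)"
    by (simp add: power2_eq_square algebra_simps)
  moreover have "0 < 4 * \<beta>^2 * (\<beta>^2 + \<beta> - 1)"
    using \<beta> by simp
  ultimately have "4 * \<beta> * (\<beta>^2 + \<beta> - 1) + 1 < (2 * \<beta>^2 + 2 * \<beta> - 1)^2"
    by linarith
  then have "s < 2 * \<beta>^2 + 2 * \<beta> - 1"
    unfolding s_def using \<beta> by (intro real_less_lsqrt) auto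
  then show "lb_ratio \<beta> < 1 + \<beta>"
    unfolding r using \<beta> by (simp add: power2_eq_square field_simps)
qed

lemma quadratic_part_eq_square:
  fixes \<beta> r x K M :: real
  assumes root: "\<beta> * r^2 - r = \<beta>^2 + \<beta> - 1" and "r \<noteq> 1" and x: "x * (r - 1) = 1 + \<beta> - r"
  shows "(1 + \<beta>/2) * M^2 + (1 + \<beta>) * K * M + K^2/2 - r * (K^2/2 + K * M + (1 + \<beta>)/2 * M^2)
    = (1 - r)/2 * (K - x * M)^2"
proof -
  have x1: "(1 - r) * x = r - 1 - \<beta>"
    using x by (simp add: algebra_simps)
  have square: "- ((1 + \<beta> - r)^2) - (r - 1) * (2 + \<beta> - r - r * \<beta>) = (\<beta> * r^2 - r) - (\<beta>^2 + \<beta> - 1)"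
    by (simp add: power2_eq_square algebra_simps)
  have "(r - 1) * ((1 - r) * x^2) = - ((x * (r - 1))^2)"
    by (simp add: power2_eq_square algebra_simps)
  also have "\<dots> = - ((1 + \<beta> - r)^2)"
    by (simp only: x)
  also have "\<dots> = (r - 1) * (2 + \<beta> - r - r * \<beta>)"
    using square root by linarith
  finally have x2: "(1 - r) * x^2 = 2 + \<beta> - r - r * \<beta>"
    using \<open>r \<noteq> 1\<close> by simp
  have "(1 - r)/2 * (K - x * M)^2 = (1 - r)/2 * K^2 - ((1 - r) * x) * K * M + ((1 - r) * x^2)/2 * M^2"
    by (simp add: power2_eq_square field_simps)
  then show ?thesis
    unfolding x1 x2 by (simp add: field_simps)
qed

lemma alg_opt_bound_gap:
  fixes \<beta> r x \<eta> K M :: real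
  assumes root: "\<beta> * r^2 - r = \<beta>^2 + \<beta> - 1" and r: "1 < r" and x: "x * (r - 1) = 1 + \<beta> - r" "0 \<le> x"
    and K: "x * M \<le> K" "K \<le> x * M + 1" and "0 \<le> M" "0 \<le> \<beta>" "0 \<le> \<eta>"
  shows "\<eta> * (1 + \<beta>)/2 * M^2 - r * (x + 1 + \<beta>)/2 * M - (2 * r - 1)/2
    \<le> alg_bound \<beta> K M - (r - \<eta>) * opt_bound \<beta> K M"
proof -
  have K0: "0 \<le> K"
    using K(1) x(2) \<open>0 \<le> M\<close> by (meson mult_nonneg_nonneg order_trans)
  have "alg_bound \<beta> K M - (r - \<eta>) * opt_bound \<beta> K M
      = ((1 + \<beta>/2) * M^2 + (1 + \<beta>) * K * M + K^2/2 - r * (K^2/2 + K * M + (1 + \<beta>)/2 * M^2))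
        + \<eta> * (K^2/2 + K * M + (1 + \<beta>)/2 * M^2) + (\<beta> * M + K)/2 + \<eta> * (K + (1 + \<beta>) * M)/2
        - r * (K + (1 + \<beta>) * M)/2"
    by (simp add: alg_bound_def opt_bound_def power2_eq_square field_simps)
  moreover have "(1 - r)/2 \<le> (1 - r)/2 * (K - x * M)^2"
  proof -
    have "(K - x * M)^2 \<le> 1"
      using K by (simp add: power_le_one)
    from mult_left_mono_neg[OF this, of "(1 - r)/2"] show ?thesis
      using r by simp
  qed
  moreover have "\<eta> * ((1 + \<beta>)/2 * M^2) \<le> \<eta> * (K^2/2 + K * M + (1 + \<beta>)/2 * M^2)"
    using K0 assms by (intro mult_left_mono) auto
  moreover have "0 \<le> (\<beta> * M + K)/2 + \<eta> * (K + (1 + \<beta>) * M)/2"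
    using K0 assms by simp
  moreover have "r * (K + (1 + \<beta>) * M)/2 \<le> r * ((x * M + 1) + (1 + \<beta>) * M)/2"
    using K r by simp
  moreover have "\<eta> * (1 + \<beta>)/2 * M^2 - r * (x + 1 + \<beta>)/2 * M - (2 * r - 1)/2
      = (1 - r)/2 + \<eta> * ((1 + \<beta>)/2 * M^2) - r * ((x * M + 1) + (1 + \<beta>) * M)/2"
    by (simp add: field_simps)
  ultimately show ?thesis
    using quadratic_part_eq_square[OF root _ x(1), where K = K and M = M] r by linarith
qed

lemma exists_sizes_alg_ge_opt:
  fixes \<beta> r \<eta> :: real
  assumes root: "\<beta> * r^2 - r = \<beta>^2 + \<beta> - 1" and r: "1 < r" "r < 1 + \<beta>" and "0 \<le> \<beta>" "0 < \<eta>"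
  shows "\<exists>(k :: nat) (m :: nat). 1 \<le> m \<and> (r - \<eta>) * opt_bound \<beta> k m \<le> alg_bound \<beta> k m"
proof -
  define x where "x = (1 + \<beta> - r) / (r - 1)"
  have x: "x * (r - 1) = 1 + \<beta> - r" "0 \<le> x"
    using r by (simp_all add: x_def)
  define D where "D = \<eta> * (1 + \<beta>)/2"
  define E where "E = r * (x + 1 + \<beta>)/2"
  define F where "F = (2 * r - 1)/2"
  have D: "0 < D"
    using assms by (simp add: D_def)
  define m :: nat where "m = nat \<lceil>(E + F) / D\<rceil> + 1"
  define k :: nat where "k = nat \<lceil>x * m\<rceil>"
  have m: "1 \<le> real m" "(E + F) / D \<le> real m"
    unfolding m_def by linarith+
  have k: "x * m \<le> k" "k \<le> x * m + 1"
    unfolding k_def using x(2) by (simp_all add: mult_nonneg_nonneg)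
  have "F * 1 \<le> F * m"
    using r m(1) by (intro mult_left_mono) (simp_all add: F_def)
  then have "E * m + F \<le> (E + F) * m"
    by (simp add: algebra_simps)
  also have "\<dots> \<le> D * m * m"
  proof (rule mult_right_mono)
    show "E + F \<le> D * m"
      using m(2) D by (simp add: pos_divide_le_eq mult.commute)
  qed simp
  finally have "0 \<le> D * m^2 - E * m - F"
    by (simp add: power2_eq_square)
  also have "\<dots> \<le> alg_bound \<beta> k m - (r - \<eta>) * opt_bound \<beta> k m"
    using alg_opt_bound_gap[OF root r(1) x k] assms unfolding D_def E_def F_def by simp
  finally show ?thesis
    using m(1) by (intro exI[of _ k] exI[of _ m]) simp
qed

theorem mainTheorem13:
  fixes \<beta> \<delta> :: real
  assumes "\<beta> \<ge> 1" and "\<delta> > 0"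
  shows "\<exists>n t p. valid_instance n t p \<and> (\<exists>\<sigma>. beta_sort_run \<beta> n t p \<sigma>) \<and>
           (\<forall>\<sigma>. beta_sort_run \<beta> n t p \<sigma> \<longrightarrow>
              cost n t p \<sigma> / OPT n t p \<ge>
                (sqrt (4 * \<beta> * (\<beta>^2 + \<beta> - 1) + 1) + 1) / (2 * \<beta>) - \<delta>)"
proof -
  define r where "r = lb_ratio \<beta>"
  have r: "\<beta> * r^2 - r = \<beta>^2 + \<beta> - 1" "1 < r" "r < 1 + \<beta>"
    unfolding r_def using lb_ratio_facts[OF assms(1)] by auto
  obtain k m :: nat where m: "1 \<le> m" and gap: "(r - \<delta>/2) * opt_bound \<beta> k m \<le> alg_bound \<beta> k m"
    using exists_sizes_alg_ge_opt[OF r, of "\<delta>/2"] assms by auto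
  define \<epsilon> where "\<epsilon> = \<delta> / (4 * r)"
  have \<epsilon>: "0 < \<epsilon>"
    using assms r by (simp add: \<epsilon>_def)
  have perturbation: "r - \<delta> \<le> (r - \<delta>/2) / (1 + 2 * \<epsilon>)"
    using assms r \<epsilon> by (simp add: \<epsilon>_def field_simps)
  have ratio: "(sqrt (4 * \<beta> * (\<beta>^2 + \<beta> - 1) + 1) + 1) / (2 * \<beta>) = r"
    by (simp add: r_def lb_ratio_def)
  have "r - \<delta> \<le> cost (k + m) (lb_test k \<epsilon>) (lb_proc \<beta> k \<epsilon>) \<sigma> / OPT (k + m) (lb_test k \<epsilon>) (lb_proc \<beta> k \<epsilon>)"
    if "beta_sort_run \<beta> (k + m) (lb_test k \<epsilon>) (lb_proc \<beta> k \<epsilon>) \<sigma>" for \<sigma>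
    using beta_sort_lb_ratio[OF _ \<epsilon> m gap that] assms(1) perturbation by auto
  moreover have "valid_instance (k + m) (lb_test k \<epsilon>) (lb_proc \<beta> k \<epsilon>)"
    using assms \<epsilon> by (intro lb_instance_valid) auto
  ultimately show ?thesis
    unfolding ratio using beta_sort_run_exists by blast
qed

end
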